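(* Let $k\ge1$, let $(A,t)$ be a $\mathcal{C}_k$-algebra, $a\in A$ and $H\subseteq A$. Then: (i) $D(a)=\big[\bigwedge_{j=1}^{k}t^j(\triangle a)\big)$, the principal lattice filter generated by $\bigwedge_{j=1}^{k}t^j(\triangle a)$; (ii) $D(H\cup\{a\})=\{x\in A: a\rightharpoondown x\in D(H)\}$; (iii) $D(a)=\{x\in A: a\rightharpoondown x=1\}$.
   Context: A modal pseudocomplemented De Morgan algebra ($mpM$-algebra) is an algebra $\langle A,\wedge,\vee,\sim,{}^\ast,0,1\rangle$ such that $\langle A,\wedge,\vee,\sim,0,1\rangle$ is a De Morgan algebra (bounded distributive lattice with $\sim\sim x=x$, $\sim(x\vee y)=\sim x\wedge\sim y$), $x^\ast$ is the pseudocomplement of $x$, and $x\vee\sim x\le x\vee x^\ast$. Put $\nabla x=\sim(\sim x\wedge x^\ast)$, $\triangle x=\sim\nabla\sim x$. A $\mathcal{C}_k$-algebra ($k\ge1$) is a pair $(A,t)$ with $A$ an $mpM$-algebra and $t$ an $mpM$-automorphism of $A$ with $t^k=\mathrm{id}$. The cyclic implication is $a\rightharpoondown b=\bigvee_{i=1}^{k}\nabla(\sim t^i(a))\vee b$. A cyclic deductive system is a set $D\subseteq A$ with $1\in D$ such that $x,\,x\rightharpoondown y\in D$ imply $y\in D$. For $H\subseteq A$, $D(H)$ denotes the smallest cyclic deductive system containing $H$, and $D(a)=D(\{a\})$. *)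

theory Defs
  imports Main
begin

text \<open>An algebra is represented by a type 'a carrying a bounded distributive
lattice structure (inf, sup, bot = 0, top = 1) together with the De Morgan
negation neg and the pseudocomplement star.\<close>

definition mpM_algebra :: "('a::{distrib_lattice,bounded_lattice} \<Rightarrow> 'a) \<Rightarrow> ('a \<Rightarrow> 'a) \<Rightarrow> bool" where
  "mpM_algebra neg star \<longleftrightarrow>
     (\<forall>x. neg (neg x) = x) \<and>
     (\<forall>x y. neg (sup x y) = inf (neg x) (neg y)) \<and>
     (\<forall>x y. inf x y = bot \<longleftrightarrow> y \<le> star x) \<and>
     (\<forall>x. sup x (neg x) \<le> sup x (star x))"

definition mpM_automorphism ::
  "('a::{distrib_lattice,bounded_lattice} \<Rightarrow> 'a) \<Rightarrow> ('a \<Rightarrow> 'a) \<Rightarrow> ('a \<Rightarrow> 'a) \<Rightarrow> bool" where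
  "mpM_automorphism neg star t \<longleftrightarrow> bij t \<and>
     (\<forall>x y. t (inf x y) = inf (t x) (t y)) \<and>
     (\<forall>x y. t (sup x y) = sup (t x) (t y)) \<and>
     (\<forall>x. t (neg x) = neg (t x)) \<and>
     (\<forall>x. t (star x) = star (t x)) \<and>
     t bot = bot \<and> t top = top"

definition Ck_algebra ::
  "nat \<Rightarrow> ('a::{distrib_lattice,bounded_lattice} \<Rightarrow> 'a) \<Rightarrow> ('a \<Rightarrow> 'a) \<Rightarrow> ('a \<Rightarrow> 'a) \<Rightarrow> bool" where
  "Ck_algebra k neg star t \<longleftrightarrow>
     mpM_algebra neg star \<and> mpM_automorphism neg star t \<and> (t ^^ k) = id"

definition nabla :: "('a::{distrib_lattice,bounded_lattice} \<Rightarrow> 'a) \<Rightarrow> ('a \<Rightarrow> 'a) \<Rightarrow> 'a \<Rightarrow> 'a" where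
  "nabla neg star x = neg (inf (neg x) (star x))"

definition delta :: "('a::{distrib_lattice,bounded_lattice} \<Rightarrow> 'a) \<Rightarrow> ('a \<Rightarrow> 'a) \<Rightarrow> 'a \<Rightarrow> 'a" where
  "delta neg star x = neg (nabla neg star (neg x))"

definition cyc_imp ::
  "nat \<Rightarrow> ('a::{distrib_lattice,bounded_lattice} \<Rightarrow> 'a) \<Rightarrow> ('a \<Rightarrow> 'a) \<Rightarrow> ('a \<Rightarrow> 'a) \<Rightarrow> 'a \<Rightarrow> 'a \<Rightarrow> 'a" where
  "cyc_imp k neg star t a b =
     sup (Sup_fin ((\<lambda>i. nabla neg star (neg ((t ^^ i) a))) ` {1..k})) b"

definition cyclic_ds ::
  "nat \<Rightarrow> ('a::{distrib_lattice,bounded_lattice} \<Rightarrow> 'a) \<Rightarrow> ('a \<Rightarrow> 'a) \<Rightarrow> ('a \<Rightarrow> 'a) \<Rightarrow> 'a set \<Rightarrow> bool" where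
  "cyclic_ds k neg star t D \<longleftrightarrow> top \<in> D \<and>
     (\<forall>x y. x \<in> D \<longrightarrow> cyc_imp k neg star t x y \<in> D \<longrightarrow> y \<in> D)"

definition cds_gen ::
  "nat \<Rightarrow> ('a::{distrib_lattice,bounded_lattice} \<Rightarrow> 'a) \<Rightarrow> ('a \<Rightarrow> 'a) \<Rightarrow> ('a \<Rightarrow> 'a) \<Rightarrow> 'a set \<Rightarrow> 'a set" where
  "cds_gen k neg star t H = \<Inter> {D. cyclic_ds k neg star t D \<and> H \<subseteq> D}"

definition principal_filter :: "'a::order \<Rightarrow> 'a set" where
  "principal_filter c = {x. c \<le> x}"

end

theory Submission
  imports Defs
begin

(* Write \<box>x (cyc_delta x below) for \<And>_{j=1..k} t^j(\<triangle>x). Each \<triangle>x = x \<sqinter> (\<sim>x)*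
   is a Boolean (complemented) element, t commutes with \<triangle>, and t permutes the orbit of \<triangle>x;
   hence \<box>x is Boolean, fixed by t, and \<box> is an idempotent meet-preserving operator with
   \<box>x \<le> x. Moreover x \<rightharpoondown> y = \<sim>\<box>x \<squnion> y, so modus ponens for \<rightharpoondown> is Boolean modus
   ponens for \<box>x. Then [\<box>a) is closed under modus ponens (since \<box>a \<le> x gives \<box>a \<le> \<box>x),
   and everything above \<box>a is reached from a, which is (i) and (iii); (ii) is the deduction
   theorem, proved by checking that {x. a \<rightharpoondown> x \<in> D} is again a cyclic deductive system. *)

lemma Inf_fin_closed:
  fixes S :: "'a::lattice set"
  assumes "finite A" "A \<noteq> {}" "A \<subseteq> S"
    and inf_closed: "\<And>x y. x \<in> S \<Longrightarrow> y \<in> S \<Longrightarrow> inf x y \<in> S"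
  shows "Inf_fin A \<in> S"
  using assms(1-3) by (induction A rule: finite_ne_induct) (auto intro: inf_closed)

lemma Inf_fin_image_inf:
  fixes f g :: "'b \<Rightarrow> 'a::lattice"
  assumes "finite I" "I \<noteq> {}"
  shows "Inf_fin ((\<lambda>i. inf (f i) (g i)) ` I) = inf (Inf_fin (f ` I)) (Inf_fin (g ` I))"
proof (rule antisym)
  have "Inf_fin ((\<lambda>i. inf (f i) (g i)) ` I) \<le> inf (f i) (g i)" if "i \<in> I" for i
    using assms(1) that by (intro Inf_fin.coboundedI) auto
  then show "Inf_fin ((\<lambda>i. inf (f i) (g i)) ` I) \<le> inf (Inf_fin (f ` I)) (Inf_fin (g ` I))"
    using assms by (auto intro!: Inf_fin.boundedI)
  show "inf (Inf_fin (f ` I)) (Inf_fin (g ` I)) \<le> Inf_fin ((\<lambda>i. inf (f i) (g i)) ` I)"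
    using assms by (auto intro!: Inf_fin.boundedI inf_mono Inf_fin.coboundedI)
qed

lemma funpow_mod_eq:
  assumes "f ^^ k = id"
  shows "f ^^ (j mod k) = f ^^ j"
proof -
  have "f ^^ j = f ^^ (j mod k + k * (j div k))" by simp
  also have "\<dots> = f ^^ (j mod k) \<circ> (f ^^ k) ^^ (j div k)" by (simp only: funpow_add funpow_mult)
  finally show ?thesis using assms by simp
qed

lemma funpow_orbit_eq_range:
  assumes "f ^^ k = id" "k \<ge> 1"
  shows "(\<lambda>j. (f ^^ j) x) ` {1..k} = range (\<lambda>j. (f ^^ j) x)"
proof (intro antisym subsetI)
  fix y assume "y \<in> range (\<lambda>j. (f ^^ j) x)"
  then obtain j where y: "y = (f ^^ (j mod k)) x"
    using funpow_mod_eq[OF assms(1)] by auto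
  show "y \<in> (\<lambda>j. (f ^^ j) x) ` {1..k}"
  proof (cases "j mod k = 0")
    case True
    then have "y = (f ^^ k) x" using y assms(1) by simp
    then show ?thesis using assms(2) by auto
  next
    case False
    then have "j mod k \<in> {1..k}" using assms(2) by (auto intro: less_imp_le)
    then show ?thesis using y by blast
  qed
qed auto

lemma image_funpow_orbit:
  assumes "f ^^ k = id" "k \<ge> 1"
  shows "f ` (\<lambda>j. (f ^^ j) x) ` {1..k} = (\<lambda>j. (f ^^ j) x) ` {1..k}"
proof -
  have "f ` range (\<lambda>j. (f ^^ j) x) = range (\<lambda>j. (f ^^ j) x)"
  proof (intro antisym subsetI)
    fix y assume "y \<in> f ` range (\<lambda>j. (f ^^ j) x)"
    then obtain j where "y = (f ^^ Suc j) x" by auto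
    then show "y \<in> range (\<lambda>j. (f ^^ j) x)" by blast
  next
    fix y assume "y \<in> range (\<lambda>j. (f ^^ j) x)"
    then obtain j where y: "y = (f ^^ j) x" by auto
    have "(f ^^ j) x = (f ^^ (j + k)) x" using assms(1) by (simp add: funpow_add)
    also have "\<dots> = (f ^^ Suc (j + k - 1)) x"
      using assms(2) by simp
    also have "\<dots> = f ((f ^^ (j + k - 1)) x)"
      by simp
    finally show "y \<in> f ` range (\<lambda>j. (f ^^ j) x)" using y by blast
  qed
  then show ?thesis using funpow_orbit_eq_range[OF assms] by simp
qed

lemma cyclic_ds_top: "cyclic_ds k neg star t D \<Longrightarrow> top \<in> D"
  unfolding cyclic_ds_def by blast

lemma cyclic_ds_mp:
  "cyclic_ds k neg star t D \<Longrightarrow> x \<in> D \<Longrightarrow> cyc_imp k neg star t x y \<in> D \<Longrightarrow> y \<in> D"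
  unfolding cyclic_ds_def by blast

lemma cyclic_ds_cds_gen: "cyclic_ds k neg star t (cds_gen k neg star t H)"
  unfolding cyclic_ds_def cds_gen_def by auto

lemma cds_gen_superset: "H \<subseteq> cds_gen k neg star t H"
  unfolding cds_gen_def by auto

lemma cds_gen_least:
  "cyclic_ds k neg star t D \<Longrightarrow> H \<subseteq> D \<Longrightarrow> cds_gen k neg star t H \<subseteq> D"
  unfolding cds_gen_def by auto

lemma cds_gen_mono: "H \<subseteq> G \<Longrightarrow> cds_gen k neg star t H \<subseteq> cds_gen k neg star t G"
  unfolding cds_gen_def by auto

locale de_morgan_lattice =
  fixes neg :: "'a::{distrib_lattice,bounded_lattice} \<Rightarrow> 'a"
  assumes neg_neg [simp]: "neg (neg x) = x"
    and neg_sup [simp]: "neg (sup x y) = inf (neg x) (neg y)"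
begin

lemma neg_inf [simp]: "neg (inf x y) = sup (neg x) (neg y)"
  by (metis neg_neg neg_sup)

lemma neg_antimono: "x \<le> y \<Longrightarrow> neg y \<le> neg x"
  by (metis inf.cobounded1 neg_sup sup_absorb2)

lemma neg_bot [simp]: "neg bot = top"
  by (metis neg_antimono neg_neg bot_least top_unique)

lemma neg_Inf_fin: "finite A \<Longrightarrow> A \<noteq> {} \<Longrightarrow> neg (Inf_fin A) = Sup_fin (neg ` A)"
  by (induction A rule: finite_ne_induct) simp_all

definition boolean :: "'a \<Rightarrow> bool" where
  "boolean x \<longleftrightarrow> inf x (neg x) = bot"

lemma boolean_inf: "boolean x \<Longrightarrow> boolean y \<Longrightarrow> boolean (inf x y)"
proof -
  have "inf (inf x y) (neg x) = inf y (inf x (neg x))" "inf (inf x y) (neg y) = inf x (inf y (neg y))"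
    by (simp_all add: inf_aci)
  then show "boolean x \<Longrightarrow> boolean y \<Longrightarrow> boolean (inf x y)"
    unfolding boolean_def by (simp add: inf_sup_distrib1)
qed

lemma boolean_Inf_fin: "finite A \<Longrightarrow> A \<noteq> {} \<Longrightarrow> \<forall>x\<in>A. boolean x \<Longrightarrow> boolean (Inf_fin A)"
  using Inf_fin_closed[of A "Collect boolean"] boolean_inf by blast

lemma boolean_inf_sup_neg: "boolean c \<Longrightarrow> inf c (sup (neg c) y) = inf c y"
  unfolding boolean_def by (simp add: inf_sup_distrib1)

lemma boolean_sup_neg_eq_top_iff: "boolean c \<Longrightarrow> sup (neg c) y = top \<longleftrightarrow> c \<le> y"
proof
  assume "boolean c" and "sup (neg c) y = top"
  then show "c \<le> y" using boolean_inf_sup_neg[of c y] by (metis inf_top_right inf.cobounded2)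
next
  assume "boolean c" and "c \<le> y"
  then have "neg (inf c (neg c)) \<le> sup (neg c) y" by (simp add: le_supI2)
  then show "sup (neg c) y = top" using \<open>boolean c\<close> unfolding boolean_def by (simp add: top_unique)
qed

end

locale pseudocomplemented_lattice =
  fixes star :: "'a::{distrib_lattice,bounded_lattice} \<Rightarrow> 'a"
  assumes inf_eq_bot_iff_le_star: "inf x y = bot \<longleftrightarrow> y \<le> star x"
begin

lemma inf_star [simp]: "inf x (star x) = bot"
  using inf_eq_bot_iff_le_star by blast

lemma star_antimono: "x \<le> y \<Longrightarrow> star y \<le> star x"
  by (metis inf_eq_bot_iff_le_star inf_star inf_mono bot_unique)

lemma star_sup: "star (sup x y) = inf (star x) (star y)"
proof (rule antisym)
  show "star (sup x y) \<le> inf (star x) (star y)" by (simp add: star_antimono)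
  have "inf x (inf (star x) (star y)) = bot" "inf y (inf (star x) (star y)) = bot"
    by (simp add: inf_assoc[symmetric], simp add: inf_left_commute[of y])
  then have "inf (sup x y) (inf (star x) (star y)) = bot"
    by (simp add: inf_sup_distrib2)
  then show "inf (star x) (star y) \<le> star (sup x y)" using inf_eq_bot_iff_le_star by blast
qed

end

locale mpM_lattice = de_morgan_lattice neg + pseudocomplemented_lattice star
  for neg star :: "'a::{distrib_lattice,bounded_lattice} \<Rightarrow> 'a" +
  assumes sup_neg_le_sup_star: "sup x (neg x) \<le> sup x (star x)"
begin

lemma delta_eq: "delta neg star x = inf x (star (neg x))"
  unfolding delta_def nabla_def by simp

lemma delta_le: "delta neg star x \<le> x"
  by (simp add: delta_eq)

lemma boolean_delta: "boolean (delta neg star x)"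
proof -
  define s where "s = star (neg x)"
  have "inf x (neg s) \<le> neg x"
    using neg_antimono[OF sup_neg_le_sup_star[of "neg x"]] unfolding s_def by simp
  then have "inf (inf x s) (neg s) \<le> inf s (neg x)"
    by (metis inf_assoc inf_commute inf_mono order_refl)
  moreover have "inf (inf x s) (neg x) \<le> inf s (neg x)"
    by (simp add: le_infI1)
  ultimately have "inf (inf x s) (neg (inf x s)) \<le> inf s (neg x)"
    by (simp add: inf_sup_distrib1)
  then show ?thesis
    unfolding boolean_def delta_eq s_def by (simp add: inf_commute bot_unique)
qed

lemma delta_inf: "delta neg star (inf x y) = inf (delta neg star x) (delta neg star y)"
  by (simp add: delta_eq star_sup inf_aci)

lemma delta_boolean: "boolean x \<Longrightarrow> delta neg star x = x"
  unfolding boolean_def delta_eq by (metis inf_absorb1 inf_commute inf_eq_bot_iff_le_star)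

end

locale cyclic_mpM_lattice = mpM_lattice neg star
  for neg star :: "'a::{distrib_lattice,bounded_lattice} \<Rightarrow> 'a" +
  fixes k :: nat and t :: "'a \<Rightarrow> 'a"
  assumes k_pos: "k \<ge> 1"
    and t_inf: "t (inf x y) = inf (t x) (t y)"
    and t_neg: "t (neg x) = neg (t x)"
    and t_star: "t (star x) = star (t x)"
    and t_period: "t ^^ k = id"
begin

lemma funpow_t_inf: "(t ^^ j) (inf x y) = inf ((t ^^ j) x) ((t ^^ j) y)"
  by (induction j) (simp_all add: t_inf)

lemma funpow_t_delta: "(t ^^ j) (delta neg star x) = delta neg star ((t ^^ j) x)"
proof -
  have "(t ^^ j) (neg x) = neg ((t ^^ j) x)" "(t ^^ j) (star x) = star ((t ^^ j) x)" for x
    by (induction j) (simp_all add: t_neg t_star)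
  then show ?thesis by (simp add: delta_eq funpow_t_inf)
qed

definition cyc_delta :: "'a \<Rightarrow> 'a" where
  "cyc_delta x = Inf_fin ((\<lambda>j. (t ^^ j) (delta neg star x)) ` {1..k})"

lemma le_cyc_delta_iff: "y \<le> cyc_delta x \<longleftrightarrow> (\<forall>j\<in>{1..k}. y \<le> (t ^^ j) (delta neg star x))"
  unfolding cyc_delta_def using k_pos by (simp add: Inf_fin.bounded_iff)

lemma cyc_delta_le: "cyc_delta x \<le> x"
proof -
  have "cyc_delta x \<le> (t ^^ k) (delta neg star x)"
    using le_cyc_delta_iff[of "cyc_delta x" x] k_pos by auto
  then show ?thesis using t_period delta_le by (simp add: order_trans)
qed

lemma boolean_cyc_delta: "boolean (cyc_delta x)"
  unfolding cyc_delta_def using k_pos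
  by (intro boolean_Inf_fin) (auto simp: funpow_t_delta boolean_delta)

lemma cyc_delta_inf: "cyc_delta (inf x y) = inf (cyc_delta x) (cyc_delta y)"
  unfolding cyc_delta_def using k_pos
  by (simp add: delta_inf funpow_t_inf Inf_fin_image_inf)

lemma cyc_delta_mono: "x \<le> y \<Longrightarrow> cyc_delta x \<le> cyc_delta y"
  unfolding le_iff_inf by (simp flip: cyc_delta_inf)

lemma t_cyc_delta: "t (cyc_delta x) = cyc_delta x"
proof -
  have "t (cyc_delta x) = Inf_fin (t ` (\<lambda>j. (t ^^ j) (delta neg star x)) ` {1..k})"
    unfolding cyc_delta_def using k_pos by (intro Inf_fin.hom_commute t_inf) auto
  then show ?thesis
    unfolding cyc_delta_def image_funpow_orbit[OF t_period k_pos] .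
qed

lemma funpow_t_cyc_delta: "(t ^^ j) (cyc_delta x) = cyc_delta x"
  by (induction j) (simp_all add: t_cyc_delta)

lemma cyc_delta_idem: "cyc_delta (cyc_delta x) = cyc_delta x"
proof -
  have "(\<lambda>j. (t ^^ j) (delta neg star (cyc_delta x))) ` {1..k} = {cyc_delta x}"
    using k_pos by (auto simp: delta_boolean[OF boolean_cyc_delta] funpow_t_cyc_delta)
  then show ?thesis unfolding cyc_delta_def[of "cyc_delta x"] by simp
qed

lemma cyc_delta_le_cyc_delta: "cyc_delta a \<le> x \<Longrightarrow> cyc_delta a \<le> cyc_delta x"
  by (metis cyc_delta_idem cyc_delta_mono)

lemma cyc_imp_eq: "cyc_imp k neg star t x y = sup (neg (cyc_delta x)) y"
proof -
  have "nabla neg star (neg ((t ^^ j) x)) = neg ((t ^^ j) (delta neg star x))" for j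
    unfolding funpow_t_delta by (simp add: delta_def)
  then have "(\<lambda>j. nabla neg star (neg ((t ^^ j) x))) ` {1..k}
      = neg ` (\<lambda>j. (t ^^ j) (delta neg star x)) ` {1..k}"
    by (simp add: image_image)
  then show ?thesis
    unfolding cyc_imp_def cyc_delta_def using k_pos by (simp add: neg_Inf_fin)
qed

lemma cyc_imp_eq_top_iff: "cyc_imp k neg star t x y = top \<longleftrightarrow> cyc_delta x \<le> y"
  by (simp add: cyc_imp_eq boolean_sup_neg_eq_top_iff boolean_cyc_delta)

lemma cyclic_ds_upward: "cyclic_ds k neg star t D \<Longrightarrow> x \<in> D \<Longrightarrow> x \<le> y \<Longrightarrow> y \<in> D"
  by (metis cyclic_ds_mp cyclic_ds_top cyc_imp_eq_top_iff cyc_delta_le order_trans)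

lemma cyclic_ds_principal_filter: "cyclic_ds k neg star t (principal_filter (cyc_delta a))"
  unfolding cyclic_ds_def principal_filter_def
proof (intro conjI allI impI; simp)
  fix x y
  assume "cyc_delta a \<le> x" and "cyc_delta a \<le> cyc_imp k neg star t x y"
  then have "cyc_delta a \<le> inf (cyc_delta x) (sup (neg (cyc_delta x)) y)"
    by (simp add: cyc_delta_le_cyc_delta cyc_imp_eq)
  then show "cyc_delta a \<le> y"
    by (simp add: boolean_inf_sup_neg boolean_cyc_delta)
qed

lemma cds_gen_singleton: "cds_gen k neg star t {a} = principal_filter (cyc_delta a)"
proof (rule antisym)
  show "cds_gen k neg star t {a} \<subseteq> principal_filter (cyc_delta a)"
    by (rule cds_gen_least[OF cyclic_ds_principal_filter]) (simp add: principal_filter_def cyc_delta_le)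
  show "principal_filter (cyc_delta a) \<subseteq> cds_gen k neg star t {a}"
  proof
    fix x assume "x \<in> principal_filter (cyc_delta a)"
    then have "cyc_imp k neg star t a x = top"
      by (simp add: principal_filter_def cyc_imp_eq_top_iff)
    then have "cyc_imp k neg star t a x \<in> cds_gen k neg star t {a}"
      using cyclic_ds_top[OF cyclic_ds_cds_gen] by simp
    then show "x \<in> cds_gen k neg star t {a}"
      using cyclic_ds_mp[OF cyclic_ds_cds_gen] cds_gen_superset by blast
  qed
qed

lemma cds_gen_singleton_eq_top: "cds_gen k neg star t {a} = {x. cyc_imp k neg star t a x = top}"
  by (simp add: cds_gen_singleton principal_filter_def cyc_imp_eq_top_iff)

lemma cyclic_ds_cyc_imp_preimage:
  assumes D: "cyclic_ds k neg star t D"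
  shows "cyclic_ds k neg star t {x. cyc_imp k neg star t a x \<in> D}"
  unfolding cyclic_ds_def
proof (intro conjI allI impI; simp)
  let ?c = "cyc_delta a"
  show "cyc_imp k neg star t a top \<in> D"
    using cyclic_ds_top[OF D] by (simp add: cyc_imp_eq)
  fix x y
  assume x: "cyc_imp k neg star t a x \<in> D"
    and xy: "cyc_imp k neg star t a (cyc_imp k neg star t x y) \<in> D"
  define p where "p = sup (neg ?c) x"
  (* Strengthen a \<rightharpoondown> (x \<rightharpoondown> y) to p \<rightharpoondown> (a \<rightharpoondown> y) and detach p. *)
  have "inf p ?c = inf x ?c"
    unfolding p_def using boolean_inf_sup_neg[OF boolean_cyc_delta] by (simp add: inf_commute)
  then have "inf (cyc_delta p) ?c = cyc_delta (inf x ?c)"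
    by (metis cyc_delta_idem cyc_delta_inf)
  also have "\<dots> \<le> cyc_delta x"
    by (simp add: cyc_delta_mono)
  finally have "neg (cyc_delta x) \<le> sup (neg (cyc_delta p)) (neg ?c)"
    using neg_antimono by fastforce
  also have "\<dots> \<le> sup (neg (cyc_delta p)) (sup (neg ?c) y)"
    by (rule sup_mono[OF order_refl sup_ge1])
  finally have "sup (neg ?c) (sup (neg (cyc_delta x)) y) \<le> cyc_imp k neg star t p (sup (neg ?c) y)"
    by (simp add: cyc_imp_eq le_supI2)
  then have "cyc_imp k neg star t p (sup (neg ?c) y) \<in> D"
    using cyclic_ds_upward[OF D] xy by (simp add: cyc_imp_eq)
  moreover have "p \<in> D"
    using x by (simp only: p_def cyc_imp_eq)
  ultimately have "sup (neg ?c) y \<in> D"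
    using cyclic_ds_mp[OF D] by blast
  then show "cyc_imp k neg star t a y \<in> D"
    by (simp add: cyc_imp_eq)
qed

lemma cds_gen_insert:
  "cds_gen k neg star t (H \<union> {a}) = {x. cyc_imp k neg star t a x \<in> cds_gen k neg star t H}"
proof (rule antisym)
  let ?D = "cds_gen k neg star t H"
  have "H \<union> {a} \<subseteq> {x. cyc_imp k neg star t a x \<in> ?D}"
  proof -
    have "cyc_imp k neg star t a a = top"
      by (simp add: cyc_imp_eq_top_iff cyc_delta_le)
    then have "cyc_imp k neg star t a a \<in> ?D"
      using cyclic_ds_top[OF cyclic_ds_cds_gen] by simp
    moreover have "cyc_imp k neg star t a x \<in> ?D" if "x \<in> H" for x
      using that cds_gen_superset cyclic_ds_upward[OF cyclic_ds_cds_gen]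
      by (fastforce simp: cyc_imp_eq)
    ultimately show ?thesis by blast
  qed
  then show "cds_gen k neg star t (H \<union> {a}) \<subseteq> {x. cyc_imp k neg star t a x \<in> ?D}"
    by (intro cds_gen_least cyclic_ds_cyc_imp_preimage cyclic_ds_cds_gen)
  show "{x. cyc_imp k neg star t a x \<in> ?D} \<subseteq> cds_gen k neg star t (H \<union> {a})"
  proof
    fix x assume "x \<in> {x. cyc_imp k neg star t a x \<in> ?D}"
    then have "cyc_imp k neg star t a x \<in> cds_gen k neg star t (H \<union> {a})"
      using cds_gen_mono[of H "H \<union> {a}"] by blast
    moreover have "a \<in> cds_gen k neg star t (H \<union> {a})"
      using cds_gen_superset by blast
    ultimately show "x \<in> cds_gen k neg star t (H \<union> {a})"
      by (rule cyclic_ds_mp[OF cyclic_ds_cds_gen, rotated])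
  qed
qed

end

theorem lemma4p1:
  fixes k :: nat and neg star t :: "'a::{distrib_lattice,bounded_lattice} \<Rightarrow> 'a"
    and a :: 'a and H :: "'a set"
  assumes "k \<ge> 1" and "Ck_algebra k neg star t"
  shows "(cds_gen k neg star t {a} =
           principal_filter (Inf_fin ((\<lambda>j. (t ^^ j) (delta neg star a)) ` {1..k})))
    \<and> (cds_gen k neg star t (H \<union> {a}) =
           {x. cyc_imp k neg star t a x \<in> cds_gen k neg star t H})
    \<and> (cds_gen k neg star t {a} = {x. cyc_imp k neg star t a x = top})"
proof -
  interpret cyclic_mpM_lattice neg star k t
    using assms unfolding Ck_algebra_def mpM_algebra_def mpM_automorphism_def
    by unfold_locales blast+
  show ?thesis
    using cds_gen_singleton cds_gen_insert cds_gen_singleton_eq_top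
    by (simp add: cyc_delta_def)
qed

end
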